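(* Let $p\in[1,\infty]$, let $W^{(1)}\in\mathbb{R}^{n_1\times n_0}$, $W^{(2)}\in\mathbb{R}^{n_2\times n_1}$, and let $f:\mathbb{R}^{n_0}\to\mathbb{R}^{n_2}$ be the two-layer network $f(x)=W^{(2)}\sigma(W^{(1)}x)$, where $\sigma(z)=(\sigma_1(z_1),\dots,\sigma_{n_1}(z_{n_1}))$ and each $\sigma_i:\mathbb{R}\to\mathbb{R}$ is slope-restricted in $[\alpha_i,\beta_i]$ with $0\le \alpha_i\le\beta_i<\infty$. Let $\alpha=(\alpha_1,\dots,\alpha_{n_1})$, $\beta=(\beta_1,\dots,\beta_{n_1})$, let $d\in\mathbb{R}^{n_1}_{+}$ be any elementwise nonnegative vector and $D=\mathrm{diag}(d)$, so that $f(x)=W^{(2)}\big(\psi(W^{(1)}x;d)+DW^{(1)}x\big)$ with $\psi(z;d)=\sigma(z)-Dz$. Then $f$ is Lipschitz continuous with respect to the $\ell_p$ norm with constant $$L(d)=\|W^{(2)}\|_p\,\big\|\mathrm{diag}\big(\max(|\beta-d|,|d-\alpha|)\big)W^{(1)}\big\|_p+\|W^{(2)}DW^{(1)}\|_p,$$ where $\max$ and $|\cdot|$ are taken elementwise.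
   Context: A function $\sigma_i:\mathbb{R}\to\mathbb{R}$ is slope-restricted in $[\alpha_i,\beta_i]$ if $\alpha_i\le \frac{\sigma_i(x)-\sigma_i(y)}{x-y}\le\beta_i$ for all $x\neq y$. For a matrix $A$, $\|A\|_p=\sup_{\|x\|_p\le 1}\|Ax\|_p$ is the induced operator norm. A Lipschitz constant $L$ in $\ell_p$ means $\|f(x)-f(y)\|_p\le L\|x-y\|_p$ for all $x,y$. *)

theory Defs
  imports "HOL-Analysis.Analysis"
begin

definition lpnorm :: "ereal \<Rightarrow> real^'n \<Rightarrow> real" where
  "lpnorm p x = (if p = \<infinity> then Max (range (\<lambda>i. \<bar>x $ i\<bar>))
                 else (\<Sum>i\<in>UNIV. \<bar>x $ i\<bar> powr real_of_ereal p) powr (1 / real_of_ereal p))"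

definition opnorm_p :: "ereal \<Rightarrow> real^'m^'n \<Rightarrow> real" where
  "opnorm_p p A = Sup ((\<lambda>x. lpnorm p (A *v x)) ` {x. lpnorm p x \<le> 1})"

definition diag_mat :: "real^'n \<Rightarrow> real^'n^'n" where
  "diag_mat v = (\<chi> i j. if i = j then v $ i else 0)"

definition slope_restricted :: "(real \<Rightarrow> real) \<Rightarrow> real \<Rightarrow> real \<Rightarrow> bool" where
  "slope_restricted s a b \<longleftrightarrow> (\<forall>x y. x \<noteq> y \<longrightarrow> a \<le> (s x - s y) / (x - y) \<and> (s x - s y) / (x - y) \<le> b)"

end

(*
  Slope restriction gives sigma_i(z_i) - sigma_i(w_i) = c_i (z_i - w_i) with c_i in [alpha_i, beta_i],
  so the shifted activation psi(z; d) = sigma(z) - D z satisfies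
  |psi_i(z) - psi_i(w)| <= max(|beta_i - d_i|, |d_i - alpha_i|) |z_i - w_i| componentwise.
  Since f(x) - f(y) = W2 (psi(W1 x) - psi(W1 y)) + W2 D W1 (x - y), the bound follows from the
  triangle inequality, the monotonicity of the l_p norm in the absolute values of the components,
  and |A v|_p <= |A|_p |v|_p. For finite p the triangle inequality (Minkowski) comes from the
  convexity of the unit ball, which in turn comes from the convexity of t |-> t^p on [0, inf).
*)
theory Submission
  imports Defs
begin

lemma convex_on_powr_nonneg:
  fixes q :: real
  assumes "1 \<le> q"
  shows "convex_on {0..} (\<lambda>x. x powr q)"
proof (rule convex_on_linorderI)
  fix t x y :: real
  assume t: "0 < t" "t < 1" and xy: "x \<in> {0..}" "y \<in> {0..}" "x < y"
  show "((1 - t) *\<^sub>R x + t *\<^sub>R y) powr q \<le> (1 - t) * x powr q + t * y powr q"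
  proof (cases "x = 0")
    case True
    have "t powr q \<le> t"
      using powr_le_one_le[of t q] t assms by simp
    then show ?thesis
      using True xy by (simp add: powr_mult mult_right_mono)
  next
    case False
    then show ?thesis
      using convex_onD[OF powr_convex[OF assms], of t x y] t xy by simp
  qed
qed simp

lemma subadditive_if_convex_unit_ball:
  fixes N :: "'a::real_vector \<Rightarrow> real"
  assumes homogeneous: "\<And>c x. N (c *\<^sub>R x) = \<bar>c\<bar> * N x"
    and definite: "\<And>x. N x = 0 \<Longrightarrow> x = 0"
    and nonneg: "\<And>x. 0 \<le> N x"
    and unit_ball: "convex {x. N x \<le> 1}"
  shows "N (x + y) \<le> N x + N y"
proof (cases "x = 0 \<or> y = 0")
  case True
  moreover have "N 0 = 0"
    using homogeneous[of 0 0] by simp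
  ultimately show ?thesis
    by auto
next
  case False
  define a b where "a = N x" and "b = N y"
  have a: "a > 0" and b: "b > 0"
    using False definite nonneg unfolding a_def b_def by (metis order_le_neq_trans)+
  have "N (x /\<^sub>R a) \<le> 1" "N (y /\<^sub>R b) \<le> 1"
    using a b by (simp_all add: homogeneous a_def b_def)
  then have "N ((a / (a + b)) *\<^sub>R (x /\<^sub>R a) + (b / (a + b)) *\<^sub>R (y /\<^sub>R b)) \<le> 1"
    using convexD[OF unit_ball, of "x /\<^sub>R a" "y /\<^sub>R b" "a / (a + b)" "b / (a + b)"] a b
    by (simp add: add_divide_distrib[symmetric])
  moreover have "x + y = (a + b) *\<^sub>R ((a / (a + b)) *\<^sub>R (x /\<^sub>R a) + (b / (a + b)) *\<^sub>R (y /\<^sub>R b))"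
    using a b by (simp add: scaleR_add_right)
  ultimately have "N (x + y) \<le> (a + b) * 1"
    using a b by (metis homogeneous abs_of_pos add_pos_pos mult_left_mono less_imp_le)
  then show ?thesis
    by (simp add: a_def b_def)
qed

definition lq_norm :: "real \<Rightarrow> real^'n \<Rightarrow> real" where
  "lq_norm q x = (\<Sum>i\<in>UNIV. \<bar>x $ i\<bar> powr q) powr (1 / q)"

definition max_norm :: "real^'n \<Rightarrow> real" where
  "max_norm x = Max (range (\<lambda>i. \<bar>x $ i\<bar>))"

lemma lpnorm_ereal [simp]: "lpnorm (ereal q) = lq_norm q"
  by (simp add: lpnorm_def lq_norm_def fun_eq_iff)

lemma lpnorm_infinity [simp]: "lpnorm \<infinity> = max_norm"
  by (simp add: lpnorm_def max_norm_def fun_eq_iff)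

lemma lq_norm_powr:
  assumes "1 \<le> q"
  shows "lq_norm q x powr q = (\<Sum>i\<in>UNIV. \<bar>x $ i\<bar> powr q)"
  using assms by (simp add: lq_norm_def powr_powr sum_nonneg)

lemma lq_norm_le_1_iff:
  assumes "1 \<le> q"
  shows "lq_norm q x \<le> 1 \<longleftrightarrow> (\<Sum>i\<in>UNIV. \<bar>x $ i\<bar> powr q) \<le> 1"
proof
  assume "lq_norm q x \<le> 1"
  then have "lq_norm q x powr q \<le> 1"
    using assms by (intro powr_le1) (auto simp: lq_norm_def)
  then show "(\<Sum>i\<in>UNIV. \<bar>x $ i\<bar> powr q) \<le> 1"
    using lq_norm_powr[OF assms, of x] by linarith
next
  assume "(\<Sum>i\<in>UNIV. \<bar>x $ i\<bar> powr q) \<le> 1"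
  then show "lq_norm q x \<le> 1"
    unfolding lq_norm_def using assms by (intro powr_le1) (auto simp: sum_nonneg)
qed

lemma abs_component_le_lq_norm:
  assumes "1 \<le> q"
  shows "\<bar>x $ i\<bar> \<le> lq_norm q x"
proof -
  have "\<bar>x $ i\<bar> powr q \<le> (\<Sum>j\<in>UNIV. \<bar>x $ j\<bar> powr q)"
    by (rule member_le_sum) auto
  then have "(\<bar>x $ i\<bar> powr q) powr (1 / q) \<le> lq_norm q x"
    unfolding lq_norm_def using assms by (intro powr_mono2) auto
  then show ?thesis
    using assms by (simp add: powr_powr)
qed

lemma lq_norm_mono:
  assumes "1 \<le> q" "\<And>i. \<bar>u $ i\<bar> \<le> \<bar>v $ i\<bar>"
  shows "lq_norm q u \<le> lq_norm q v"
  unfolding lq_norm_def using assms by (intro powr_mono2 sum_mono sum_nonneg) auto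

lemma lq_norm_scaleR:
  assumes "1 \<le> q"
  shows "lq_norm q (c *\<^sub>R x) = \<bar>c\<bar> * lq_norm q x"
proof -
  have "(\<Sum>i\<in>UNIV. \<bar>(c *\<^sub>R x) $ i\<bar> powr q) = \<bar>c\<bar> powr q * (\<Sum>i\<in>UNIV. \<bar>x $ i\<bar> powr q)"
    by (simp add: sum_distrib_left abs_mult powr_mult)
  then show ?thesis
    using assms by (simp add: lq_norm_def powr_mult powr_powr sum_nonneg)
qed

lemma convex_lq_norm_unit_ball:
  assumes q: "1 \<le> q"
  shows "convex {x :: real^'n. lq_norm q x \<le> 1}"
proof (rule convexI)
  fix x y :: "real^'n" and u v :: real
  assume "x \<in> {x. lq_norm q x \<le> 1}" "y \<in> {x. lq_norm q x \<le> 1}"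
    and uv: "0 \<le> u" "0 \<le> v" "u + v = 1"
  then have x: "(\<Sum>i\<in>UNIV. \<bar>x $ i\<bar> powr q) \<le> 1" and y: "(\<Sum>i\<in>UNIV. \<bar>y $ i\<bar> powr q) \<le> 1"
    using lq_norm_le_1_iff[OF q] by auto
  have u: "u = 1 - v"
    using uv by simp
  have "\<bar>(u *\<^sub>R x + v *\<^sub>R y) $ i\<bar> powr q \<le> u * \<bar>x $ i\<bar> powr q + v * \<bar>y $ i\<bar> powr q" for i
  proof -
    have "\<bar>(u *\<^sub>R x + v *\<^sub>R y) $ i\<bar> powr q \<le> (u * \<bar>x $ i\<bar> + v * \<bar>y $ i\<bar>) powr q"
      using q uv by (intro powr_mono2) (auto intro: order_trans[OF abs_triangle_ineq] simp: abs_mult)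
    also have "\<dots> \<le> u * \<bar>x $ i\<bar> powr q + v * \<bar>y $ i\<bar> powr q"
      using convex_onD[OF convex_on_powr_nonneg[OF q], of v "\<bar>x $ i\<bar>" "\<bar>y $ i\<bar>"] uv
      unfolding u by simp
    finally show ?thesis .
  qed
  then have "(\<Sum>i\<in>UNIV. \<bar>(u *\<^sub>R x + v *\<^sub>R y) $ i\<bar> powr q)
      \<le> u * (\<Sum>i\<in>UNIV. \<bar>x $ i\<bar> powr q) + v * (\<Sum>i\<in>UNIV. \<bar>y $ i\<bar> powr q)"
    unfolding sum_distrib_left sum.distrib[symmetric] by (rule sum_mono)
  also have "\<dots> \<le> u + v"
    using x y uv by (intro add_mono) (auto intro: mult_left_le)
  finally show "u *\<^sub>R x + v *\<^sub>R y \<in> {x. lq_norm q x \<le> 1}"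
    using uv by (simp add: lq_norm_le_1_iff[OF q])
qed

lemma lq_norm_triangle:
  assumes "1 \<le> q"
  shows "lq_norm q (x + y) \<le> lq_norm q x + lq_norm q y"
proof (rule subadditive_if_convex_unit_ball)
  show "x = 0" if "lq_norm q x = 0" for x :: "real^'n"
    using abs_component_le_lq_norm[OF assms, of x] that by (simp add: vec_eq_iff)
  show "0 \<le> lq_norm q x" for x :: "real^'n"
    by (simp add: lq_norm_def)
qed (use assms lq_norm_scaleR convex_lq_norm_unit_ball in auto)

lemma abs_component_le_max_norm: "\<bar>x $ i\<bar> \<le> max_norm x"
  unfolding max_norm_def by (rule Max_ge) auto

lemma max_norm_le_iff: "max_norm x \<le> c \<longleftrightarrow> (\<forall>i. \<bar>x $ i\<bar> \<le> c)"
  unfolding max_norm_def by (subst Max_le_iff) auto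

lemma max_norm_attained: "\<exists>i. max_norm x = \<bar>x $ i\<bar>"
proof -
  have "max_norm x \<in> range (\<lambda>i. \<bar>x $ i\<bar>)"
    unfolding max_norm_def by (rule Max_in) auto
  then show ?thesis
    by auto
qed

lemma max_norm_mono: "(\<And>i. \<bar>u $ i\<bar> \<le> \<bar>v $ i\<bar>) \<Longrightarrow> max_norm u \<le> max_norm v"
  by (meson abs_component_le_max_norm max_norm_le_iff order_trans)

lemma max_norm_scaleR: "max_norm (c *\<^sub>R x) = \<bar>c\<bar> * max_norm x"
proof (rule antisym)
  show "max_norm (c *\<^sub>R x) \<le> \<bar>c\<bar> * max_norm x"
    by (auto simp: max_norm_le_iff abs_mult intro: mult_left_mono abs_component_le_max_norm)
  obtain i where "max_norm x = \<bar>x $ i\<bar>"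
    using max_norm_attained by blast
  then show "\<bar>c\<bar> * max_norm x \<le> max_norm (c *\<^sub>R x)"
    using abs_component_le_max_norm[of "c *\<^sub>R x" i] by (simp add: abs_mult)
qed

lemma max_norm_triangle: "max_norm (x + y) \<le> max_norm x + max_norm y"
  unfolding max_norm_le_iff
  by (metis abs_component_le_max_norm abs_triangle_ineq add_mono order_trans vector_add_component)

lemma abs_component_le_lpnorm: "1 \<le> p \<Longrightarrow> \<bar>x $ i\<bar> \<le> lpnorm p x"
  by (cases p) (simp_all add: abs_component_le_max_norm abs_component_le_lq_norm)

lemma lpnorm_nonneg: "1 \<le> p \<Longrightarrow> 0 \<le> lpnorm p x"
  using abs_component_le_lpnorm[of p x undefined] by linarith

lemma lpnorm_zero: "1 \<le> p \<Longrightarrow> lpnorm p 0 = 0"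
  by (cases p) (simp_all add: max_norm_def lq_norm_def)

lemma lpnorm_eq_0_iff:
  assumes "1 \<le> p"
  shows "lpnorm p x = 0 \<longleftrightarrow> x = 0"
proof
  show "x = 0" if "lpnorm p x = 0"
    using abs_component_le_lpnorm[OF assms, of x] that by (simp add: vec_eq_iff)
qed (simp add: lpnorm_zero[OF assms])

lemma lpnorm_mono:
  fixes u v :: "real^'n"
  assumes "1 \<le> p" "\<And>i. \<bar>u $ i\<bar> \<le> \<bar>v $ i\<bar>"
  shows "lpnorm p u \<le> lpnorm p v"
  using assms by (cases p) (simp_all add: max_norm_mono lq_norm_mono)

lemma lpnorm_scaleR:
  fixes x :: "real^'n"
  assumes "1 \<le> p"
  shows "lpnorm p (c *\<^sub>R x) = \<bar>c\<bar> * lpnorm p x"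
  using assms by (cases p) (simp_all add: max_norm_scaleR lq_norm_scaleR)

lemma lpnorm_triangle:
  fixes x y :: "real^'n"
  assumes "1 \<le> p"
  shows "lpnorm p (x + y) \<le> lpnorm p x + lpnorm p y"
  using assms by (cases p) (simp_all add: max_norm_triangle lq_norm_triangle)

lemma lpnorm_sum_le:
  fixes v :: "'a \<Rightarrow> real^'n"
  assumes "1 \<le> p"
  shows "lpnorm p (\<Sum>j\<in>S. v j) \<le> (\<Sum>j\<in>S. lpnorm p (v j))"
proof (induction S rule: infinite_finite_induct)
  case (insert j S)
  then show ?case
    using lpnorm_triangle[OF assms, of "v j" "sum v S"] by simp
qed (simp_all add: lpnorm_zero[OF assms])

lemma lpnorm_mult_vec_le_sum_columns:
  fixes A :: "real^'m^'n"
  assumes "1 \<le> p"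
  shows "lpnorm p (A *v x) \<le> (\<Sum>j\<in>UNIV. lpnorm p (column j A)) * lpnorm p x"
proof -
  have "lpnorm p (A *v x) \<le> (\<Sum>j\<in>UNIV. lpnorm p (x $ j *\<^sub>R column j A))"
    unfolding matrix_mult_sum scalar_mult_eq_scaleR by (rule lpnorm_sum_le[OF assms])
  also have "\<dots> \<le> (\<Sum>j\<in>UNIV. lpnorm p x * lpnorm p (column j A))"
    by (intro sum_mono)
      (simp add: lpnorm_scaleR[OF assms] mult_right_mono abs_component_le_lpnorm[OF assms]
        lpnorm_nonneg[OF assms])
  finally show ?thesis
    by (simp add: sum_distrib_left mult.commute)
qed

lemma bdd_above_opnorm_p:
  fixes A :: "real^'m^'n"
  assumes "1 \<le> p"
  shows "bdd_above ((\<lambda>x. lpnorm p (A *v x)) ` {x. lpnorm p x \<le> 1})"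
proof (rule bdd_aboveI2)
  fix x :: "real^'m"
  assume "x \<in> {x. lpnorm p x \<le> 1}"
  then show "lpnorm p (A *v x) \<le> (\<Sum>j\<in>UNIV. lpnorm p (column j A))"
    using lpnorm_mult_vec_le_sum_columns[OF assms, of A x]
    by (simp add: mult_left_le sum_nonneg lpnorm_nonneg[OF assms] order_trans)
qed

lemma lpnorm_mult_vec_le_opnorm_p:
  fixes A :: "real^'m^'n"
  assumes "1 \<le> p"
  shows "lpnorm p (A *v x) \<le> opnorm_p p A * lpnorm p x"
proof (cases "x = 0")
  case True
  then show ?thesis
    by (simp add: lpnorm_zero[OF assms])
next
  case False
  define n where "n = lpnorm p x"
  have n: "n > 0"
    using False lpnorm_nonneg[OF assms, of x] lpnorm_eq_0_iff[OF assms, of x] n_def by simp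
  have "lpnorm p (A *v (x /\<^sub>R n)) \<le> opnorm_p p A"
    unfolding opnorm_p_def using n
    by (intro cSup_upper bdd_above_opnorm_p[OF assms]) (simp add: lpnorm_scaleR[OF assms] n_def)
  then show ?thesis
    using n by (simp add: matrix_vector_mult_scaleR lpnorm_scaleR[OF assms] n_def field_simps)
qed

lemma opnorm_p_nonneg:
  fixes A :: "real^'m^'n"
  assumes "1 \<le> p"
  shows "0 \<le> opnorm_p p A"
proof -
  have "lpnorm p (A *v 0) \<le> opnorm_p p A"
    unfolding opnorm_p_def
    by (intro cSup_upper bdd_above_opnorm_p[OF assms] imageI) (simp add: lpnorm_zero[OF assms])
  then show ?thesis
    by (simp add: lpnorm_zero[OF assms])
qed

lemma diag_mat_mult_vec: "diag_mat v *v x = (\<chi> i. v $ i * x $ i)"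
  unfolding diag_mat_def matrix_vector_mult_def vec_eq_iff
  by (simp add: if_distrib[where f="\<lambda>c. c * _"] cong: if_cong)

lemma slope_restricted_diff:
  assumes "slope_restricted s a b" "a \<le> b"
  obtains c where "a \<le> c" "c \<le> b" "s x - s y = c * (x - y)"
proof (cases "x = y")
  case True
  then show ?thesis
    using that assms(2) by simp
next
  case False
  then show ?thesis
    using that[of "(s x - s y) / (x - y)"] assms(1) by (simp add: slope_restricted_def)
qed

lemma slope_restricted_shift_bound:
  assumes "slope_restricted s a b" "a \<le> b"
  shows "\<bar>s x - s y - d * (x - y)\<bar> \<le> max \<bar>b - d\<bar> \<bar>d - a\<bar> * \<bar>x - y\<bar>"
proof -
  obtain c where c: "a \<le> c" "c \<le> b" and diff: "s x - s y = c * (x - y)"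
    using slope_restricted_diff[OF assms] .
  have "\<bar>c - d\<bar> \<le> max \<bar>b - d\<bar> \<bar>d - a\<bar>"
    using c by auto
  then show ?thesis
    by (simp add: diff left_diff_distrib[symmetric] abs_mult mult_right_mono)
qed

lemma lpnorm_shifted_layer_diff_le:
  fixes \<sigma> :: "'n::finite \<Rightarrow> real \<Rightarrow> real" and \<alpha> \<beta> d z w :: "real^'n"
  assumes "1 \<le> p" "\<forall>i. slope_restricted (\<sigma> i) (\<alpha> $ i) (\<beta> $ i)" "\<forall>i. \<alpha> $ i \<le> \<beta> $ i"
  shows "lpnorm p ((\<chi> i. \<sigma> i (z $ i)) - (\<chi> i. \<sigma> i (w $ i)) - diag_mat d *v (z - w))
    \<le> lpnorm p (diag_mat (\<chi> i. max \<bar>\<beta> $ i - d $ i\<bar> \<bar>d $ i - \<alpha> $ i\<bar>) *v (z - w))"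
proof (rule lpnorm_mono[OF assms(1)])
  fix i
  show "\<bar>((\<chi> i. \<sigma> i (z $ i)) - (\<chi> i. \<sigma> i (w $ i)) - diag_mat d *v (z - w)) $ i\<bar>
    \<le> \<bar>(diag_mat (\<chi> i. max \<bar>\<beta> $ i - d $ i\<bar> \<bar>d $ i - \<alpha> $ i\<bar>) *v (z - w)) $ i\<bar>"
    using slope_restricted_shift_bound[of "\<sigma> i" "\<alpha> $ i" "\<beta> $ i" "z $ i" "w $ i" "d $ i"] assms(2,3)
    by (simp add: diag_mat_mult_vec abs_mult)
qed

theorem lemma1:
  fixes p :: ereal
    and W1 :: "real^'n0^'n1" and W2 :: "real^'n1^'n2"
    and \<sigma> :: "'n1 \<Rightarrow> real \<Rightarrow> real"
    and \<alpha> \<beta> d :: "real^'n1"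
    and f :: "real^'n0 \<Rightarrow> real^'n2"
  assumes p: "1 \<le> p"
    and slope: "\<forall>i. slope_restricted (\<sigma> i) (\<alpha> $ i) (\<beta> $ i)"
    and alpha_nonneg: "\<forall>i. 0 \<le> \<alpha> $ i"
    and alpha_le_beta: "\<forall>i. \<alpha> $ i \<le> \<beta> $ i"
    and d_nonneg: "\<forall>i. 0 \<le> d $ i"
    and f_def: "\<forall>x. f x = W2 *v (\<chi> i. \<sigma> i ((W1 *v x) $ i))"
  shows "\<forall>x y. lpnorm p (f x - f y) \<le>
           (opnorm_p p W2 * opnorm_p p (diag_mat (\<chi> i. max \<bar>\<beta> $ i - d $ i\<bar> \<bar>d $ i - \<alpha> $ i\<bar>) ** W1)
            + opnorm_p p (W2 ** diag_mat d ** W1)) * lpnorm p (x - y)"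
proof (intro allI)
  fix x y :: "real^'n0"
  define m where "m = (\<chi> i. max \<bar>\<beta> $ i - d $ i\<bar> \<bar>d $ i - \<alpha> $ i\<bar>)"
  define h where "h = x - y"
  define u where "u = (\<chi> i. \<sigma> i ((W1 *v x) $ i)) - (\<chi> i. \<sigma> i ((W1 *v y) $ i)) - diag_mat d *v (W1 *v h)"
  have split: "f x - f y = W2 *v u + (W2 ** diag_mat d ** W1) *v h"
    by (simp add: u_def f_def matrix_vector_mult_diff_distrib matrix_vector_mul_assoc
        matrix_mul_assoc)
  have "lpnorm p u \<le> lpnorm p ((diag_mat m ** W1) *v h)"
    using lpnorm_shifted_layer_diff_le[OF p slope alpha_le_beta, of "W1 *v x" "W1 *v y" d]
    by (simp add: u_def m_def h_def matrix_vector_mult_diff_distrib matrix_vector_mul_assoc)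
  also have "\<dots> \<le> opnorm_p p (diag_mat m ** W1) * lpnorm p h"
    by (rule lpnorm_mult_vec_le_opnorm_p[OF p])
  finally have u: "lpnorm p u \<le> opnorm_p p (diag_mat m ** W1) * lpnorm p h" .
  have "lpnorm p (f x - f y) \<le> lpnorm p (W2 *v u) + lpnorm p ((W2 ** diag_mat d ** W1) *v h)"
    unfolding split by (rule lpnorm_triangle[OF p])
  also have "\<dots> \<le> opnorm_p p W2 * lpnorm p u + opnorm_p p (W2 ** diag_mat d ** W1) * lpnorm p h"
    by (intro add_mono lpnorm_mult_vec_le_opnorm_p[OF p])
  also have "\<dots> \<le> opnorm_p p W2 * (opnorm_p p (diag_mat m ** W1) * lpnorm p h)
      + opnorm_p p (W2 ** diag_mat d ** W1) * lpnorm p h"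
    by (intro add_mono mult_left_mono u opnorm_p_nonneg[OF p] order_refl)
  finally show "lpnorm p (f x - f y) \<le> (opnorm_p p W2 * opnorm_p p (diag_mat m ** W1)
      + opnorm_p p (W2 ** diag_mat d ** W1)) * lpnorm p (x - y)"
    by (simp add: h_def algebra_simps)
qed

end
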